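(* Let $s\in\mathbb N$ and $\mathbf n=2^{2m_s}\mathbf 1+2^{m_s}\mathbf p+\mathbf q$ with $\mathbf 0\le\mathbf p,\mathbf q<2^{m_s}\mathbf 1$. Then for $\tau=\tau_F$ and every $\mathbf m<2^{m_s}\mathbf 1$, $$\widehat\tau_{\mathbf n}(\Delta^{(m_s)}_{\mathbf m})=2^{s-1-dm_s}W^{(m_s)}_{\mathbf q\mathbf m}\,\delta^{\mathbf p}_{\mathbf m}\,\mathrm I(\Delta^{(m_s)}_{\mathbf m}\subset\widetilde F_{s-1}),$$ and $$\widehat\tau_{\mathbf n}=2^{s-1-dm_s}W^{(m_s)}_{\mathbf q\mathbf p}\,\mathrm I(\Delta^{(m_s)}_{\mathbf p}\subset\widetilde F_{s-1}).$$
   Context: Fix $d\ge2$. $\mathbb G$ is the dyadic group: sequences $g=(g_k)_{k\ge0}$, $g_k\in\{0,1\}$, coordinatewise addition mod 2, product topology; $\mathbb G^d$ its $d$-th power. For $n\in\mathbb N_0$, $n=\sum_kn_k2^k$, $n_k\in\{0,1\}$. Dyadic interval of rank $k$: $\Delta^{(k)}_m=\{g: g_t=m_{k-1-t},\ 0\le t<k\}$; dyadic cube $\Delta^{(k)}_{\mathbf m}=\prod_l\Delta^{(k)}_{m^l}$. Vector order coordinatewise, $\mathbf 0,\mathbf 1$ the constant vectors. Walsh functions $W_n(g)=\prod_k(-1)^{g_kn_k}$, $W_{\mathbf n}(\mathbf g)=\prod_lW_{n^l}(g^l)$; $W^{(k)}_{\mathbf n\mathbf m}$ is the constant value of $W_{\mathbf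 n}$ on $\Delta^{(k)}_{\mathbf m}$ ($\mathbf n,\mathbf m<2^k\mathbf 1$); $R_{k\mathbf 1}:=W_{2^k\mathbf 1}$. $\delta^{\mathbf p}_{\mathbf m}$ is the Kronecker delta, $\mathrm I(\cdot)$ the indicator of a statement. Quasimeasure: $\tau$ on dyadic cubes with $\tau(\Delta^{(k)}_{\mathbf m})=\sum_{\boldsymbol\sigma\in\{0,1\}^d}\tau(\Delta^{(k+1)}_{2\mathbf m+\boldsymbol\sigma})$; for a dyadic cube $\Delta$ of rank $r$, $\widehat\tau_{\mathbf n}(\Delta):=\int_\Delta W_{\mathbf n}d\tau:=\sum_{\Delta^{(k)}_{\mathbf m}\subset\Delta}W^{(k)}_{\mathbf n\mathbf m}\tau(\Delta^{(k)}_{\mathbf m})$ for any $k\ge r$ with $\mathbf n<2^k\mathbf 1$, and $\widehat\tau_{\mathbf n}:=\widehat\tau_{\mathbf n}(\mathbb G^d)$. For nonempty closed $E$, $\tau_E$ is the unique nonnegative quasimeasure with $\tau_E(\mathbb G^d)=1$, $\tau_E(\Delta)=0$ iff $\Delta\cap E=\emptyset$, splitting the value of a cube meeting $E$ equally among its $2^d$ children that meet $E$. Let $m_1=0$, $m_{s+1}=2(2m_s+1)$; $F_s=\bigcup_{\mathbf m,\mathbf m'<2^{m_s}\mathbf 1}\{\mathbf g\in\Delta^{(2m_s)}_{2^{m_s}\mathbf m+\mathbf m'}: R_{2m_s\mathbf 1}(\mathbf g)=W^{(m_s)}_{\mathbf m\mathbf m'}\}$, $\widetilde F_s=\bigcap_{k=1}^sF_k$,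 $\widetilde F_0=\mathbb G^d$, $F=\bigcap_{s\ge1}F_s$. *)

theory Defs
  imports Complex_Main
begin

text \<open>Points of the dyadic group G: sequences nat => bool (bit g_k).
  Points of G^d: functions 'd => nat => bool, with 'd a finite index type, d = CARD('d).
  Integer vectors: 'd => nat.\<close>

type_synonym 'd pt = "'d \<Rightarrow> nat \<Rightarrow> bool"
type_synonym 'd vec = "'d \<Rightarrow> nat"

definition dyint :: "nat \<Rightarrow> nat \<Rightarrow> (nat \<Rightarrow> bool) set" where
  "dyint k m = {g. \<forall>t<k. g t = bit m (k - 1 - t)}"

definition cube :: "nat \<Rightarrow> 'd vec \<Rightarrow> 'd pt set" where
  "cube k m = {g. \<forall>l. g l \<in> dyint k (m l)}"

definition walsh :: "nat \<Rightarrow> (nat \<Rightarrow> bool) \<Rightarrow> real" where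
  "walsh n g = (-1) ^ card {k. bit n k \<and> g k}"

definition walshv :: "'d::finite vec \<Rightarrow> 'd pt \<Rightarrow> real" where
  "walshv n g = (\<Prod>l\<in>UNIV. walsh (n l) (g l))"

definition cube_pt :: "nat \<Rightarrow> 'd vec \<Rightarrow> 'd pt" where
  "cube_pt k m = (\<lambda>l t. t < k \<and> bit (m l) (k - 1 - t))"

text \<open>W^(k)_{n m}: the constant value of W_n on Delta^(k)_m (for n, m < 2^k 1).\<close>
definition Wc :: "nat \<Rightarrow> 'd::finite vec \<Rightarrow> 'd vec \<Rightarrow> real" where
  "Wc k n m = walshv n (cube_pt k m)"

definition Rk :: "nat \<Rightarrow> 'd::finite pt \<Rightarrow> real" where
  "Rk k = walshv (\<lambda>l. 2 ^ k)"

definition idx :: "nat \<Rightarrow> 'd vec set" where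
  "idx k = {m. \<forall>l. m l < 2 ^ k}"

text \<open>A quasimeasure is given by its values tau k m on the cubes Delta^(k)_m.\<close>
definition quasimeasure :: "(nat \<Rightarrow> 'd::finite vec \<Rightarrow> real) \<Rightarrow> bool" where
  "quasimeasure tau \<longleftrightarrow> (\<forall>k. \<forall>m\<in>idx k.
     tau k m = (\<Sum>\<sigma>\<in>idx 1. tau (Suc k) (\<lambda>l. 2 * m l + \<sigma> l)))"

text \<open>int_Delta W_n d tau for the cube Delta = Delta^(r)_m0, computed at the level
  k = least k >= r with n < 2^k 1 (any admissible k gives the same value for a quasimeasure).\<close>
definition tauhat :: "(nat \<Rightarrow> 'd::finite vec \<Rightarrow> real) \<Rightarrow> 'd vec \<Rightarrow> nat \<Rightarrow> 'd vec \<Rightarrow> real" where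
  "tauhat tau n r m0 =
     (let k = (LEAST k. r \<le> k \<and> n \<in> idx k) in
      \<Sum>m\<in>{m\<in>idx k. cube k m \<subseteq> cube r m0}. Wc k n m * tau k m)"

definition tauhat_all :: "(nat \<Rightarrow> 'd::finite vec \<Rightarrow> real) \<Rightarrow> 'd vec \<Rightarrow> real" where
  "tauhat_all tau n = tauhat tau n 0 (\<lambda>l. 0)"

text \<open>tau_E: total mass 1, the value of a cube meeting E split equally among the
  children meeting E, and 0 on cubes not meeting E.  The parent of Delta^(k+1)_m is
  Delta^(k)_{m div 2}.\<close>
fun tauE :: "'d::finite pt set \<Rightarrow> nat \<Rightarrow> 'd vec \<Rightarrow> real" where
  "tauE E 0 m = (if cube 0 m \<inter> E = {} then 0 else 1)"
| "tauE E (Suc k) m =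
     (if cube (Suc k) m \<inter> E = {} then 0
      else tauE E k (\<lambda>l. m l div 2) /
        real (card {\<sigma>\<in>idx 1. cube (Suc k) (\<lambda>l. 2 * (m l div 2) + \<sigma> l) \<inter> E \<noteq> {}}))"

text \<open>m_s with m_1 = 0, m_{s+1} = 2(2 m_s + 1); ms' j = m_{j+1}.\<close>
fun ms' :: "nat \<Rightarrow> nat" where
  "ms' 0 = 0"
| "ms' (Suc j) = 2 * (2 * ms' j + 1)"

definition ms :: "nat \<Rightarrow> nat" where
  "ms s = ms' (s - 1)"

definition Fs :: "nat \<Rightarrow> 'd::finite pt set" where
  "Fs s = (\<Union>m\<in>idx (ms s). \<Union>m'\<in>idx (ms s).
      {g \<in> cube (2 * ms s) (\<lambda>l. 2 ^ ms s * m l + m' l). Rk (2 * ms s) g = Wc (ms s) m m'})"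

definition Ftil :: "nat \<Rightarrow> 'd::finite pt set" where
  "Ftil s = (\<Inter>k\<in>{1..s}. Fs k)"

definition Fset :: "'d::finite pt set" where
  "Fset = (\<Inter>s\<in>{1..}. Fs s)"

end

theory Submission
  imports Defs "HOL-Library.FuncSet" "HOL-Library.Cardinality"
begin

text \<open>Membership in F_s is one sign condition at digit level 2 m_s: R_{2 m_s}(g), the product of
  the signs of the digits g_l(2 m_s), must equal a Walsh value determined by the digits of g below
  that level. As the levels are distinct, a cube of rank k meets F iff its digits satisfy the
  conditions of the levels below k (a violated condition is repaired by flipping one digit at its
  level), and exactly half of the 2^d children of such a cube meet F when k is a level, all of them
  otherwise. So tau_F(Delta^(k)_m) = 2^(c(k) - d k) on cubes meeting F, c(k) being the number of
  levels below k. On the subcubes of Delta^(m_s)_m of rank 2 m_s + 1, indexed by a block m' of m_s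
  digits and a last digit sigma, W_n = W_q(m) W_p(m') R(sigma), and tau_F is nonzero iff
  Delta^(m_s)_m lies in F~_(s-1) and R(sigma) = W_m(m'). Summing over sigma leaves
  2^(d-1) W_m(m'), and orthogonality in m' produces delta^p_m.\<close>

text \<open>The index of the subcube of Delta^(r)_m of rank r + j whose last j digits form x.\<close>

abbreviation sub_index :: "nat \<Rightarrow> 'd vec \<Rightarrow> 'd vec \<Rightarrow> 'd vec" where
  "sub_index j m x \<equiv> (\<lambda>l. 2 ^ j * m l + x l)"

section \<open>Binary digits and Walsh functions\<close>

lemma bit_nat_less_exp_imp: "(x::nat) < 2 ^ k \<Longrightarrow> bit x b \<Longrightarrow> b < k"
  by (metis bit_take_bit_iff take_bit_nat_eq_self)

lemma finite_bit_nat: "finite {t. bit (x::nat) t}"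
  by (rule finite_subset[of _ "{..<x}"]) (auto intro: bit_nat_less_exp_imp[OF less_exp])

lemma nat_eq_if_low_bits_eq:
  "(a::nat) < 2 ^ k \<Longrightarrow> b < 2 ^ k \<Longrightarrow> (\<And>i. i < k \<Longrightarrow> bit a i = bit b i) \<Longrightarrow> a = b"
  by (metis bit_eq_iff bit_nat_less_exp_imp)

lemma bit_mult_exp_add:
  assumes "(x::nat) < 2 ^ j"
  shows "bit (2 ^ j * m + x) i \<longleftrightarrow> (if i < j then bit x i else bit m (i - j))"
proof (cases "i < j")
  case True
  have "take_bit j (2 ^ j * m + x) = x" using assms by (simp add: take_bit_eq_mod)
  then show ?thesis using True by (metis bit_take_bit_iff)
next
  case False
  have "drop_bit j (2 ^ j * m + x) = m" using assms by (simp add: drop_bit_eq_div)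
  then show ?thesis using False by (metis bit_drop_bit_eq comp_apply le_add_diff_inverse not_less)
qed

lemma walsh_eq_prod: "walsh n x = (\<Prod>u\<in>{u. bit n u}. if x u then -1 else 1)"
  using finite_bit_nat[of n] by (simp add: walsh_def prod.If_cases Int_def)

lemma walsh_eq_if_agree:
  assumes "n < 2 ^ k" and "\<And>t. t < k \<Longrightarrow> x t = y t"
  shows "walsh n x = walsh n y"
  unfolding walsh_eq_prod using assms by (intro prod.cong) (auto dest: bit_nat_less_exp_imp)

lemma walsh_mult_exp_add:
  assumes "a < 2 ^ j"
  shows "walsh (2 ^ j * b + a) x = walsh a x * walsh b (\<lambda>t. x (t + j))"
proof -
  let ?s = "\<lambda>u. if x u then -1 else 1 :: real"
  have bits: "{u. bit (2 ^ j * b + a) u} = {u. bit a u} \<union> (\<lambda>u. u + j) ` {u. bit b u}"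
    using assms by (auto simp: bit_mult_exp_add dest: bit_nat_less_exp_imp
        intro!: image_eqI[where x = "_ - j"])
  have "{u. bit a u} \<inter> (\<lambda>u. u + j) ` {u. bit b u} = {}"
    using assms by (auto dest: bit_nat_less_exp_imp)
  then have "prod ?s {u. bit (2 ^ j * b + a) u} = prod ?s {u. bit a u} * prod (?s \<circ> (\<lambda>u. u + j)) {u. bit b u}"
    unfolding bits by (simp add: prod.union_disjoint finite_bit_nat prod.reindex)
  then show ?thesis by (simp add: walsh_eq_prod comp_def)
qed

lemma walsh_flip: "walsh n (x(t := \<not> x t)) = (if bit n t then -1 else 1) * walsh n x"
proof -
  have "walsh n (x(t := \<not> x t))
      = (\<Prod>u\<in>{u. bit n u}. (if u = t then -1 else 1) * (if x u then -1 else 1))"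
    unfolding walsh_eq_prod by (rule prod.cong) auto
  then show ?thesis by (simp add: prod.distrib finite_bit_nat walsh_eq_prod)
qed

definition flip_digit :: "'d \<Rightarrow> nat \<Rightarrow> 'd pt \<Rightarrow> 'd pt" where
  "flip_digit l t g = g(l := (g l)(t := \<not> g l t))"

lemma walshv_flip:
  "walshv n (flip_digit l t g) = (if bit (n l) t then -1 else 1) * walshv n g"
proof -
  have "walshv n (flip_digit l t g)
      = (\<Prod>l'\<in>UNIV. (if l' = l then if bit (n l) t then -1 else 1 else 1) * walsh (n l') (g l'))"
    unfolding walshv_def flip_digit_def by (rule prod.cong) (auto simp: walsh_flip)
  then show ?thesis by (simp add: prod.distrib walshv_def)
qed

lemma walshv_pm1: "walshv n g \<in> {1, -1}"
proof -
  have "walsh k x * walsh k x = 1" for k x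
    by (simp add: walsh_def flip: power_add)
  then have "walshv n g * walshv n g = 1"
    by (simp add: walshv_def flip: prod.distrib)
  then show ?thesis
    by (metis insertI1 insertI2 square_eq_1_iff)
qed

lemma walshv_zero [simp]: "walshv (\<lambda>_. 0) g = 1"
  by (simp add: walshv_def walsh_def)

section \<open>Dyadic cubes and their indices\<close>

lemma mem_cube_iff: "g \<in> cube k m \<longleftrightarrow> (\<forall>l t. t < k \<longrightarrow> g l t = cube_pt k m l t)"
  by (auto simp: cube_def dyint_def cube_pt_def)

lemma cube_pt_in_cube: "cube_pt k m \<in> cube k m"
  by (simp add: mem_cube_iff)

lemma idx_PiE: "idx k = PiE UNIV (\<lambda>_. {..<2 ^ k})"
  by (auto simp: idx_def PiE_def extensional_def)

lemma finite_idx: "finite (idx k :: 'd::finite vec set)"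
  by (simp add: idx_PiE finite_PiE)

lemma card_idx: "card (idx k :: 'd::finite vec set) = 2 ^ (k * CARD('d))"
  by (simp add: idx_PiE card_PiE power_mult)

lemma cube_index_unique:
  assumes "m \<in> idx k" "m' \<in> idx k" "g \<in> cube k m" "g \<in> cube k m'"
  shows "m = m'"
proof
  fix l
  have "bit (m l) i = bit (m' l) i" if "i < k" for i
  proof -
    have "k - 1 - (k - 1 - i) = i" "k - 1 - i < k" using that by auto
    then show ?thesis using assms(3,4) by (metis mem_cube_iff cube_pt_def)
  qed
  then show "m l = m' l"
    using assms(1,2) by (intro nat_eq_if_low_bits_eq[of _ k]) (auto simp: idx_def)
qed

lemma ex_cube: "\<exists>m\<in>idx k. g \<in> cube k m"
proof
  let ?m = "\<lambda>l. horner_sum of_bool 2 (rev (map (g l) [0..<k])) :: nat"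
  have "horner_sum of_bool 2 bs < (2::nat) ^ length bs" for bs
    by (rule horner_sum_of_bool_2_less)
  from this[of "rev (map (g _) [0..<k])"] show "?m \<in> idx k"
    by (simp add: idx_def)
  show "g \<in> cube k ?m"
    by (auto simp: mem_cube_iff cube_pt_def bit_horner_sum_bit_iff rev_nth)
qed

lemma sub_index_in_idx:
  assumes "m \<in> idx r" "x \<in> idx j"
  shows "sub_index j m x \<in> idx (r + j)"
  unfolding idx_def
proof (intro CollectI allI)
  fix l
  have "2 ^ j * m l + x l < 2 ^ j * (m l + 1)"
    using assms(2) by (simp add: idx_def)
  also have "\<dots> \<le> 2 ^ j * 2 ^ r"
    using assms(1) by (intro mult_le_mono2) (simp add: idx_def Suc_le_eq)
  finally show "2 ^ j * m l + x l < 2 ^ (r + j)"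
    by (simp add: power_add mult.commute)
qed

lemma idx_add_cases:
  assumes "y \<in> idx (r + j)"
  obtains m x where "m \<in> idx r" "x \<in> idx j" "y = sub_index j m x"
proof
  show "(\<lambda>l. y l div 2 ^ j) \<in> idx r"
    using assms by (auto simp: idx_def power_add less_mult_imp_div_less)
  show "(\<lambda>l. y l mod 2 ^ j) \<in> idx j"
    by (simp add: idx_def)
qed simp

lemma sum_idx_add:
  fixes f :: "'d vec \<Rightarrow> 'a::comm_monoid_add"
  shows "(\<Sum>y\<in>idx (r + j). f y) = (\<Sum>m\<in>idx r. \<Sum>x\<in>idx j. f (sub_index j m x))"
proof -
  have "(\<Sum>y\<in>idx (r + j). f y) = (\<Sum>(m, x)\<in>idx r \<times> idx j. f (sub_index j m x))"
  proof (rule sum.reindex_bij_witness[where i = "\<lambda>(m, x). sub_index j m x"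
        and j = "\<lambda>y. (\<lambda>l. y l div 2 ^ j, \<lambda>l. y l mod 2 ^ j)"])
    fix y :: "'d vec" assume "y \<in> idx (r + j)"
    then show "(\<lambda>l. y l div 2 ^ j, \<lambda>l. y l mod 2 ^ j) \<in> idx r \<times> idx j"
      by (auto simp: idx_def power_add less_mult_imp_div_less)
  next
    fix mx :: "'d vec \<times> 'd vec" assume "mx \<in> idx r \<times> idx j"
    then show "(case mx of (m, x) \<Rightarrow> sub_index j m x) \<in> idx (r + j)"
      by (auto intro: sub_index_in_idx)
  qed (auto simp: idx_def)
  then show ?thesis by (simp add: sum.cartesian_product)
qed

lemma cube_pt_sub_index_low:
  assumes "x \<in> idx j" "t < r"
  shows "cube_pt (r + j) (sub_index j m x) l t = cube_pt r m l t"
proof -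
  have "\<not> r + j - 1 - t < j" "r + j - 1 - t - j = r - 1 - t" using assms(2) by auto
  then show ?thesis using assms by (simp add: cube_pt_def bit_mult_exp_add idx_def)
qed

lemma cube_pt_sub_index_shift:
  assumes "x \<in> idx j"
  shows "cube_pt (r + j) (sub_index j m x) l (u + r) = cube_pt j x l u"
  using assms by (auto simp: cube_pt_def bit_mult_exp_add idx_def)

lemma cube_sub_index_subset:
  assumes "x \<in> idx j"
  shows "cube (r + j) (sub_index j m x) \<subseteq> cube r m"
proof
  fix g assume "g \<in> cube (r + j) (sub_index j m x)"
  then show "g \<in> cube r m"
    using cube_pt_sub_index_low[OF assms] by (simp add: mem_cube_iff)
qed

lemma inj_sub_index: "inj (sub_index j m)"
  by (auto simp: inj_def fun_eq_iff)

lemma subcubes_eq_image: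
  assumes "m \<in> idx r"
  shows "{y \<in> idx (r + j). cube (r + j) y \<subseteq> cube r m} = sub_index j m ` idx j"
proof (intro subset_antisym subsetI)
  fix y assume y: "y \<in> {y \<in> idx (r + j). cube (r + j) y \<subseteq> cube r m}"
  then obtain m' x where m': "m' \<in> idx r" and x: "x \<in> idx j" and yeq: "y = sub_index j m' x"
    by (blast elim: idx_add_cases)
  have "cube_pt (r + j) y \<in> cube r m'"
    using cube_pt_in_cube cube_sub_index_subset[OF x] yeq by blast
  moreover have "cube_pt (r + j) y \<in> cube r m"
    using cube_pt_in_cube y by blast
  ultimately have "m' = m"
    using cube_index_unique[OF m' assms] by blast
  then show "y \<in> sub_index j m ` idx j"
    using x yeq by blast
next
  fix y assume "y \<in> sub_index j m ` idx j"
  then obtain x where "x \<in> idx j" "y = sub_index j m x" by blast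
  then show "y \<in> {y \<in> idx (r + j). cube (r + j) y \<subseteq> cube r m}"
    using assms cube_sub_index_subset sub_index_in_idx by blast
qed

section \<open>Walsh functions on dyadic cubes\<close>

text \<open>The frequency is split with its low digits first and the position with its high digits
  first, because W^(k)_{n m} pairs bit t of n with digit t of the point, that is with bit k - 1 - t
  of m.\<close>

lemma Wc_sub_index:
  assumes "n1 \<in> idx a" "m2 \<in> idx b"
  shows "Wc (a + b) (sub_index a n2 n1) (sub_index b m1 m2) = Wc a n1 m1 * Wc b n2 m2"
proof -
  let ?X = "cube_pt (a + b) (sub_index b m1 m2)"
  have low: "walsh (n1 l) (?X l) = walsh (n1 l) (cube_pt a m1 l)" for l
    using assms by (intro walsh_eq_if_agree[of _ a]) (auto simp: idx_def cube_pt_sub_index_low)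
  have high: "(\<lambda>t. ?X l (t + a)) = cube_pt b m2 l" for l
    using cube_pt_sub_index_shift[OF assms(2)] by auto
  have "walsh (2 ^ a * n2 l + n1 l) (?X l) = walsh (n1 l) (cube_pt a m1 l) * walsh (n2 l) (cube_pt b m2 l)" for l
    using walsh_mult_exp_add[of "n1 l" a "n2 l" "?X l"] assms(1) low high by (simp add: idx_def)
  then show ?thesis
    by (simp add: Wc_def walshv_def prod.distrib)
qed

lemma Wc_sq: "Wc k n m * Wc k n m = 1"
  using walshv_pm1[of n "cube_pt k m"] by (auto simp: Wc_def)

lemma Wc_flip_bit:
  assumes "t < k"
  shows "Wc k n (m(l := flip_bit (k - 1 - t) (m l))) = (if bit (n l) t then -1 else 1) * Wc k n m"
proof -
  have "cube_pt k (m(l := flip_bit (k - 1 - t) (m l))) l' t' = flip_digit l t (cube_pt k m) l' t'"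
    for l' t'
    using assms by (cases "t' < k") (auto simp: cube_pt_def flip_digit_def bit_flip_bit_iff)
  then have "cube_pt k (m(l := flip_bit (k - 1 - t) (m l))) = flip_digit l t (cube_pt k m)"
    by (simp add: fun_eq_iff)
  then show ?thesis
    by (simp add: Wc_def walshv_flip)
qed

lemma sum_Wc_mult_Wc:
  fixes p m :: "'d::finite vec"
  assumes p: "p \<in> idx k" and m: "m \<in> idx k"
  shows "(\<Sum>x\<in>idx k. Wc k p x * Wc k m x) = (if p = m then 2 ^ (k * CARD('d)) else 0)"
proof (cases "p = m")
  case True
  then show ?thesis by (simp add: Wc_sq card_idx)
next
  case False
  then obtain l where "p l \<noteq> m l" by auto
  then obtain t where t: "t < k" "bit (p l) t \<noteq> bit (m l) t"
    using p m nat_eq_if_low_bits_eq[of "p l" k "m l"] by (auto simp: idx_def)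
  define \<phi> where "\<phi> x = x(l := flip_bit (k - 1 - t) (x l))" for x :: "'d vec"
  define f where "f x = Wc k p x * Wc k m x" for x
  have \<phi>_idx: "\<phi> x \<in> idx k" if "x \<in> idx k" for x
  proof -
    have "\<not> k \<le> k - 1 - t" using t(1) by simp
    then have "take_bit k (flip_bit (k - 1 - t) (x l)) = flip_bit (k - 1 - t) (x l)"
      using that by (simp add: take_bit_flip_bit_eq idx_def take_bit_nat_eq_self)
    then have "flip_bit (k - 1 - t) (x l) < 2 ^ k"
      by (metis take_bit_nat_less_exp)
    then show ?thesis
      using that by (simp add: \<phi>_def idx_def)
  qed
  have "flip_bit j (flip_bit j a) = a" for j a :: nat
    by (rule bit_eqI) (auto simp: bit_flip_bit_iff)
  then have \<phi>_\<phi>: "\<phi> (\<phi> x) = x" for x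
    by (simp add: \<phi>_def)
  have "f (\<phi> x) = - f x" for x
    using Wc_flip_bit[OF t(1), where n = p and m = x] Wc_flip_bit[OF t(1), where n = m and m = x] t(2)
    by (auto simp: f_def \<phi>_def)
  then have "sum f (idx k) = - sum f (idx k)"
    using sum.reindex_bij_witness[of "idx k" \<phi> \<phi> "idx k" f "f \<circ> \<phi>"] \<phi>_idx \<phi>_\<phi>
    by (simp add: sum_negf)
  then show ?thesis
    using False by (simp add: f_def)
qed

text \<open>Wc 1 (\<lambda>_. 1) \<sigma> is the sign (-1)^(\<sigma>_1 + ... + \<sigma>_d), the value of R_k on the child
  Delta^(k+1)_(2 m + \<sigma>) of Delta^(k)_m.\<close>

lemma sum_parity: "(\<Sum>\<sigma>\<in>(idx 1 :: 'd::finite vec set). Wc 1 (\<lambda>_. 1) \<sigma>) = 0"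
proof -
  have "(\<lambda>_. 1) \<noteq> (\<lambda>_. 0 :: nat)" by (metis zero_neq_one)
  moreover have "(\<lambda>_. 1) \<in> (idx 1 :: 'd vec set)" "(\<lambda>_. 0) \<in> (idx 1 :: 'd vec set)"
    by (simp_all add: idx_def)
  ultimately have "(\<Sum>\<sigma>\<in>(idx 1 :: 'd vec set). Wc 1 (\<lambda>_. 1) \<sigma> * Wc 1 (\<lambda>_. 0) \<sigma>) = 0"
    by (simp only: sum_Wc_mult_Wc) simp
  then show ?thesis
    by (simp add: Wc_def)
qed

lemma card_parity:
  assumes "c \<in> {1, -1}"
  shows "real (card {\<sigma> \<in> idx 1 :: 'd::finite vec set. Wc 1 (\<lambda>_. 1) \<sigma> = c}) = 2 ^ CARD('d) / 2"
proof -
  let ?w = "Wc 1 (\<lambda>_. 1) :: 'd vec \<Rightarrow> real"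
  have ind: "(if ?w \<sigma> = c then 1 else 0) = (1 + c * ?w \<sigma>) / 2" for \<sigma>
    using assms walshv_pm1[of "\<lambda>_. 1" "cube_pt 1 \<sigma>"] by (auto simp: Wc_def)
  have "real (card {\<sigma> \<in> idx 1. ?w \<sigma> = c}) = (\<Sum>\<sigma>\<in>{\<sigma> \<in> idx 1. ?w \<sigma> = c}. 1)"
    by simp
  also have "\<dots> = (\<Sum>\<sigma>\<in>idx 1. if ?w \<sigma> = c then 1 else 0)"
    by (rule sum.inter_filter[OF finite_idx])
  also have "\<dots> = (\<Sum>\<sigma>\<in>idx 1. (1 + c * ?w \<sigma>) / 2)"
    by (intro sum.cong refl ind)
  also have "\<dots> = (real (card (idx 1 :: 'd vec set)) + c * (\<Sum>\<sigma>\<in>idx 1. ?w \<sigma>)) / 2"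
    by (simp add: sum.distrib sum_distrib_left flip: sum_divide_distrib)
  also have "\<dots> = 2 ^ CARD('d) / 2"
    using sum_parity[where 'd = 'd] by (simp add: card_idx)
  finally show ?thesis .
qed

section \<open>The sign conditions defining F\<close>

lemma ms_Suc [simp]: "ms (Suc i) = ms' i"
  by (simp add: ms_def)

lemma le_ms': "i \<le> ms' i"
  by (induction i) auto

lemma double_ms'_less: "i < j \<Longrightarrow> 2 * ms' i < ms' j"
  by (induction j) (auto simp: less_Suc_eq)

lemma strict_mono_ms': "strict_mono ms'"
  using double_ms'_less by (intro strict_monoI) fastforce

lemma Rk_pm1: "Rk k g \<in> {1, -1}"
  unfolding Rk_def by (rule walshv_pm1)

lemma Wc_pm1: "Wc k n m \<in> {1, -1}"
  unfolding Wc_def by (rule walshv_pm1)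

lemma Rk_eq_if_agree:
  assumes "\<And>l t. t \<le> k \<Longrightarrow> x l t = y l t"
  shows "Rk k x = Rk k y"
  unfolding Rk_def walshv_def
  using assms by (intro prod.cong refl walsh_eq_if_agree[of _ "Suc k"]) auto

lemma Rk_flip_digit: "Rk k (flip_digit l k g) = - Rk k g"
  by (simp add: Rk_def walshv_flip bit_exp_iff)

lemma sub_index_eq_iff:
  assumes "x \<in> idx j" "y \<in> idx j"
  shows "sub_index j m x = sub_index j m' y \<longleftrightarrow> m = m' \<and> x = y"
proof
  assume eq: "sub_index j m x = sub_index j m' y"
  have "m l = m' l \<and> x l = y l" for l
  proof -
    have "(2 ^ j * m l + x l) div 2 ^ j = (2 ^ j * m' l + y l) div 2 ^ j"
         "(2 ^ j * m l + x l) mod 2 ^ j = (2 ^ j * m' l + y l) mod 2 ^ j"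
      using eq by (simp_all add: fun_eq_iff)
    then show ?thesis
      using assms by (simp add: idx_def)
  qed
  then show "m = m' \<and> x = y" by auto
qed simp

lemma mem_Fs_iff:
  assumes m: "m \<in> idx (ms s)" and m': "m' \<in> idx (ms s)"
    and g: "g \<in> cube (2 * ms s) (sub_index (ms s) m m')"
  shows "g \<in> Fs s \<longleftrightarrow> Rk (2 * ms s) g = Wc (ms s) m m'"
proof
  let ?M = "ms s"
  assume "g \<in> Fs s"
  then obtain a a' where a: "a \<in> idx ?M" "a' \<in> idx ?M"
    and ga: "g \<in> cube (2 * ?M) (sub_index ?M a a')" and R: "Rk (2 * ?M) g = Wc ?M a a'"
    unfolding Fs_def by blast
  have "sub_index ?M a a' = sub_index ?M m m'"
    using cube_index_unique[OF sub_index_in_idx[OF a] sub_index_in_idx[OF m m']] ga g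
    by (simp add: mult_2)
  then show "Rk (2 * ?M) g = Wc ?M m m'"
    using R a(2) m' by (simp add: sub_index_eq_iff)
next
  assume "Rk (2 * ms s) g = Wc (ms s) m m'"
  then show "g \<in> Fs s"
    unfolding Fs_def using m m' g by blast
qed

lemma Fs_iff_Rk_eq:
  assumes "\<And>l t. t < 2 * ms s \<Longrightarrow> x l t = y l t"
  shows "(x \<in> Fs s \<longleftrightarrow> y \<in> Fs s) \<longleftrightarrow> Rk (2 * ms s) x = Rk (2 * ms s) y"
proof -
  let ?M = "ms s"
  obtain c where c: "c \<in> idx (?M + ?M)" "x \<in> cube (?M + ?M) c"
    using ex_cube by blast
  then obtain a a' where a: "a \<in> idx ?M" "a' \<in> idx ?M" and "c = sub_index ?M a a'"
    by (blast elim: idx_add_cases)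
  moreover have "y \<in> cube (?M + ?M) c"
    using c(2) assms by (simp add: mem_cube_iff)
  ultimately have "x \<in> Fs s \<longleftrightarrow> Rk (2 * ?M) x = Wc ?M a a'"
    and "y \<in> Fs s \<longleftrightarrow> Rk (2 * ?M) y = Wc ?M a a'"
    using c(2) mem_Fs_iff[OF a] by (simp_all add: mult_2)
  then show ?thesis
    using Rk_pm1[of "2 * ?M" x] Rk_pm1[of "2 * ?M" y] Wc_pm1[of ?M a a'] by auto
qed

lemma Fs_cong:
  assumes "\<And>l t. t \<le> 2 * ms s \<Longrightarrow> x l t = y l t"
  shows "x \<in> Fs s \<longleftrightarrow> y \<in> Fs s"
  using Fs_iff_Rk_eq[of s x y] Rk_eq_if_agree[of "2 * ms s" x y] assms by simp

lemma flip_digit_mem_Fs_iff: "flip_digit l (2 * ms s) g \<in> Fs s \<longleftrightarrow> g \<notin> Fs s"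
proof -
  have "Rk (2 * ms s) (flip_digit l (2 * ms s) g) \<noteq> Rk (2 * ms s) g"
    using Rk_pm1[of "2 * ms s" g] by (auto simp: Rk_flip_digit)
  moreover have "flip_digit l (2 * ms s) g l' t = g l' t" if "t < 2 * ms s" for l' t
    using that by (simp add: flip_digit_def)
  ultimately show ?thesis
    using Fs_iff_Rk_eq[of s "flip_digit l (2 * ms s) g" g] by blast
qed

lemma mem_Fset_iff: "g \<in> Fset \<longleftrightarrow> (\<forall>i. g \<in> Fs (Suc i))"
  by (auto simp: Fset_def) (metis Suc_pred le_refl not_less_eq_eq zero_less_iff_neq_zero)

lemma mem_Ftil_iff: "g \<in> Ftil s \<longleftrightarrow> (\<forall>i<s. g \<in> Fs (Suc i))"
  by (auto simp: Ftil_def Suc_le_eq) (metis Suc_pred less_Suc_eq_le not_gr0 not_less_eq_eq)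

definition admissible :: "nat \<Rightarrow> 'd::finite pt \<Rightarrow> bool" where
  "admissible k g \<longleftrightarrow> (\<forall>i. 2 * ms' i < k \<longrightarrow> g \<in> Fs (Suc i))"

lemma admissible_cong:
  assumes "\<And>l t. t < k \<Longrightarrow> x l t = y l t"
  shows "admissible k x \<longleftrightarrow> admissible k y"
proof -
  have "x \<in> Fs (Suc i) \<longleftrightarrow> y \<in> Fs (Suc i)" if "2 * ms' i < k" for i
    using that assms by (intro Fs_cong) simp
  then show ?thesis
    by (auto simp: admissible_def)
qed

lemma admissible_Suc:
  "admissible (Suc k) g \<longleftrightarrow> admissible k g \<and> (\<forall>i. 2 * ms' i = k \<longrightarrow> g \<in> Fs (Suc i))"
  by (auto simp: admissible_def less_Suc_eq)

lemma admissible_ms'_iff: "admissible (ms' s) g \<longleftrightarrow> g \<in> Ftil s"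
proof -
  have "2 * ms' i < ms' s \<longleftrightarrow> i < s" for i
    using double_ms'_less[of i s] strict_mono_less_eq[OF strict_mono_ms', of s i] by auto
  then show ?thesis
    by (simp add: admissible_def mem_Ftil_iff)
qed

lemma admissible_Suc_double_ms'_iff:
  "admissible (Suc (2 * ms' s)) g \<longleftrightarrow> admissible (ms' s) g \<and> g \<in> Fs (Suc s)"
proof -
  have "2 * ms' i < Suc (2 * ms' s) \<longleftrightarrow> 2 * ms' i < ms' s \<or> i = s" for i
    using double_ms'_less[of i s] strict_mono_less_eq[OF strict_mono_ms', of i s] by auto
  then show ?thesis
    unfolding admissible_def by auto
qed

text \<open>A point satisfying the conditions below level k is extended to a point of F by repairing,
  level after level, the digit 2 m_(i+1) of one fixed coordinate: that digit enters the condition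
  of F_(i+1) only through the sign of R, and no earlier condition involves it.\<close>

primrec repair :: "'d \<Rightarrow> 'd::finite pt \<Rightarrow> nat \<Rightarrow> 'd pt" where
  "repair l g 0 = g"
| "repair l g (Suc i) =
    (if repair l g i \<in> Fs (Suc i) then repair l g i else flip_digit l (2 * ms' i) (repair l g i))"

declare repair.simps(2) [simp del]

lemma repair_mem_Fs: "repair l g (Suc i) \<in> Fs (Suc i)"
  using flip_digit_mem_Fs_iff[of l "Suc i"] by (auto simp: repair.simps(2))

lemma repair_Suc_apply: "t \<noteq> 2 * ms' i \<Longrightarrow> repair l g (Suc i) l' t = repair l g i l' t"
  by (simp add: repair.simps(2) flip_digit_def)

lemma repair_stable:
  assumes "i \<le> j" "t < 2 * ms' i"
  shows "repair l g j l' t = repair l g i l' t"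
  using assms(1)
proof (induction j rule: dec_induct)
  case (step j)
  have "ms' i \<le> ms' j"
    using step.hyps(1) strict_mono_less_eq[OF strict_mono_ms'] by blast
  then have "t \<noteq> 2 * ms' j"
    using assms(2) by simp
  then show ?case
    using step.IH by (simp add: repair_Suc_apply)
qed simp

lemma repair_agree:
  assumes "admissible k g" "t < k"
  shows "repair l g i l' t = g l' t"
  using assms(2)
proof (induction i arbitrary: l' t)
  case (Suc i)
  show ?case
  proof (cases "repair l g i \<in> Fs (Suc i)")
    case False
    have "\<not> 2 * ms' i < k"
    proof
      assume "2 * ms' i < k"
      then have "repair l g i \<in> Fs (Suc i) \<longleftrightarrow> g \<in> Fs (Suc i)"
        using Suc.IH by (intro Fs_cong) simp
      then show False
        using False \<open>2 * ms' i < k\<close> assms(1) by (simp add: admissible_def)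
    qed
    then have "t \<noteq> 2 * ms' i"
      using Suc.prems by simp
    then show ?thesis
      using Suc by (simp add: repair_Suc_apply)
  qed (use Suc in \<open>simp add: repair.simps(2)\<close>)
qed simp

lemma admissible_extends_to_Fset:
  assumes "admissible k g"
  obtains G where "G \<in> Fset" "\<And>l t. t < k \<Longrightarrow> G l t = g l t"
proof
  define G where "G l t = repair undefined g (Suc t) l t" for l t
  have "G l t = repair undefined g (Suc i) l t" if "t \<le> 2 * ms' i" for i l t
  proof -
    define j where "j = Suc (max t i)"
    have "t < 2 * ms' (Suc t)"
      using le_ms'[of "Suc t"] by simp
    moreover have "t < 2 * ms' (Suc i)"
      using that double_ms'_less[of i "Suc i"] by simp
    ultimately have "repair undefined g j l t = repair undefined g (Suc t) l t"
      and "repair undefined g j l t = repair undefined g (Suc i) l t"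
      by (simp_all add: j_def repair_stable)
    then show ?thesis
      by (simp add: G_def)
  qed
  then have "G \<in> Fs (Suc i)" for i
    using Fs_cong[of "Suc i" G] repair_mem_Fs by simp
  then show "G \<in> Fset"
    by (simp add: mem_Fset_iff)
  show "G l t = g l t" if "t < k" for l t
    using assms that by (simp add: G_def repair_agree)
qed

lemma cube_disjoint_Fset_iff: "cube k m \<inter> Fset = {} \<longleftrightarrow> \<not> admissible k (cube_pt k m)"
proof
  assume "cube k m \<inter> Fset = {}"
  show "\<not> admissible k (cube_pt k m)"
  proof
    assume "admissible k (cube_pt k m)"
    then obtain G where "G \<in> Fset" "\<And>l t. t < k \<Longrightarrow> G l t = cube_pt k m l t"
      using admissible_extends_to_Fset by blast
    then have "G \<in> cube k m \<inter> Fset"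
      by (simp add: mem_cube_iff)
    with \<open>cube k m \<inter> Fset = {}\<close> show False
      by blast
  qed
next
  assume not_adm: "\<not> admissible k (cube_pt k m)"
  show "cube k m \<inter> Fset = {}"
  proof (rule ccontr)
    assume "cube k m \<inter> Fset \<noteq> {}"
    then obtain g where g: "g \<in> cube k m" "g \<in> Fset" by blast
    then have "admissible k g"
      by (simp add: admissible_def mem_Fset_iff)
    then show False
      using not_adm g(1) admissible_cong[of k g "cube_pt k m"] by (simp add: mem_cube_iff)
  qed
qed

lemma cube_subset_Ftil_iff: "cube (ms' s) m \<subseteq> Ftil s \<longleftrightarrow> admissible (ms' s) (cube_pt (ms' s) m)"
proof -
  have "g \<in> Ftil s \<longleftrightarrow> admissible (ms' s) (cube_pt (ms' s) m)" if "g \<in> cube (ms' s) m" for g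
    using that admissible_cong[of "ms' s" g "cube_pt (ms' s) m"]
    by (simp add: mem_cube_iff flip: admissible_ms'_iff)
  then show ?thesis
    using cube_pt_in_cube by blast
qed

section \<open>The quasimeasure tau_F\<close>

definition constraints_below :: "nat \<Rightarrow> nat" where
  "constraints_below k = card {i. 2 * ms' i < k}"

lemma constraints_below_Suc:
  "constraints_below (Suc k) = constraints_below k + (if \<exists>i. 2 * ms' i = k then 1 else 0)"
proof -
  have "i < k" if "2 * ms' i < k" for i
    using le_ms'[of i] that by linarith
  then have fin: "finite {i. 2 * ms' i < k}"
    by (auto simp: finite_nat_set_iff_bounded)
  show ?thesis
  proof (cases "\<exists>i. 2 * ms' i = k")
    case True
    then obtain i where i: "2 * ms' i = k" by blast
    have "2 * ms' j < Suc k \<longleftrightarrow> j = i \<or> 2 * ms' j < k" for j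
      using i strict_mono_eq[OF strict_mono_ms', of j i] by auto
    then have "{j. 2 * ms' j < Suc k} = insert i {j. 2 * ms' j < k}"
      by auto
    then have "card {j. 2 * ms' j < Suc k} = Suc (card {j. 2 * ms' j < k})"
      using i fin by simp
    then show ?thesis
      using True by (simp only: constraints_below_def) simp
  next
    case False
    then have "{j. 2 * ms' j < Suc k} = {j. 2 * ms' j < k}"
      using less_Suc_eq by blast
    then show ?thesis
      using False by (simp only: constraints_below_def) simp
  qed
qed

lemma constraints_below_Suc_double_ms': "constraints_below (Suc (2 * ms' s)) = Suc s"
proof -
  have "2 * ms' i < Suc (2 * ms' s) \<longleftrightarrow> i \<le> s" for i
    using strict_mono_less_eq[OF strict_mono_ms', of i s] by linarith
  then have "{i. 2 * ms' i < Suc (2 * ms' s)} = {..s}"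
    by auto
  then show ?thesis
    by (simp only: constraints_below_def) simp
qed

lemma Rk_cube_pt_child:
  assumes "\<sigma> \<in> idx 1"
  shows "Rk k (cube_pt (Suc k) (sub_index 1 a \<sigma>)) = Wc 1 (\<lambda>_. 1) \<sigma>"
proof -
  have "Rk k (cube_pt (k + 1) (sub_index 1 a \<sigma>))
      = Wc (k + 1) (sub_index k (\<lambda>_. 1) (\<lambda>_. 0)) (sub_index 1 a \<sigma>)"
    by (simp add: Rk_def Wc_def)
  also have "\<dots> = Wc k (\<lambda>_. 0) a * Wc 1 (\<lambda>_. 1) \<sigma>"
    using assms by (intro Wc_sub_index) (simp_all add: idx_def)
  finally show ?thesis
    by (simp add: Wc_def)
qed

lemma child_mem_Fs_iff:
  assumes "m \<in> idx (ms s)" "m' \<in> idx (ms s)" "\<sigma> \<in> idx 1"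
  shows "cube_pt (Suc (2 * ms s)) (sub_index 1 (sub_index (ms s) m m') \<sigma>) \<in> Fs s
    \<longleftrightarrow> Wc 1 (\<lambda>_. 1) \<sigma> = Wc (ms s) m m'"
proof -
  let ?g = "cube_pt (Suc (2 * ms s)) (sub_index 1 (sub_index (ms s) m m') \<sigma>)"
  have "?g \<in> cube (2 * ms s + 1) (sub_index 1 (sub_index (ms s) m m') \<sigma>)"
    by (simp add: cube_pt_in_cube)
  then have "?g \<in> cube (2 * ms s) (sub_index (ms s) m m')"
    by (rule subsetD[OF cube_sub_index_subset[OF assms(3)]])
  from mem_Fs_iff[OF assms(1,2) this] show ?thesis
    by (simp only: Rk_cube_pt_child[OF assms(3)])
qed

lemma card_admissible_children:
  fixes a :: "'d::finite vec"
  assumes "a \<in> idx k"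
  shows "real (card {\<sigma> \<in> idx 1. admissible (Suc k) (cube_pt (Suc k) (sub_index 1 a \<sigma>))})
    = (if admissible k (cube_pt k a) then 2 ^ CARD('d) / (if \<exists>i. 2 * ms' i = k then 2 else 1) else 0)"
  (is "real (card ?S) = _")
proof -
  define child where "child \<sigma> = cube_pt (Suc k) (sub_index 1 a \<sigma>)" for \<sigma> :: "'d vec"
  have "admissible k (child \<sigma>) \<longleftrightarrow> admissible k (cube_pt k a)" if "\<sigma> \<in> idx 1" for \<sigma>
    using that by (intro admissible_cong) (simp add: child_def cube_pt_sub_index_low[where r = k and j = 1, simplified])
  then have S: "?S = {\<sigma> \<in> idx 1. admissible k (cube_pt k a)
      \<and> (\<forall>i. 2 * ms' i = k \<longrightarrow> child \<sigma> \<in> Fs (Suc i))}"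
    by (auto simp: admissible_Suc child_def)
  show ?thesis
  proof (cases "admissible k (cube_pt k a)")
    case False
    then have "?S = {}"
      using S by blast
    then show ?thesis
      using False by (simp only: card.empty) simp
  next
    case True
    show ?thesis
    proof (cases "\<exists>i. 2 * ms' i = k")
      case False
      then show ?thesis using S True by (simp add: card_idx)
    next
      case True
      then obtain i where i: "2 * ms' i = k" by blast
      obtain b b' where b: "b \<in> idx (ms (Suc i))" "b' \<in> idx (ms (Suc i))"
        and a_eq: "a = sub_index (ms' i) b b'"
        using assms i idx_add_cases[of a "ms' i" "ms' i"] by (auto simp: mult_2)
      have "child \<sigma> \<in> Fs (Suc j) \<longleftrightarrow> Wc 1 (\<lambda>_. 1) \<sigma> = Wc (ms' i) b b'"
        if "\<sigma> \<in> idx 1" "2 * ms' j = k" for \<sigma> j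
        using that i strict_mono_eq[OF strict_mono_ms', of j i] child_mem_Fs_iff[OF b that(1)] a_eq
        by (simp add: child_def)
      then have "?S = {\<sigma> \<in> idx 1. Wc 1 (\<lambda>_. 1) \<sigma> = Wc (ms' i) b b'}"
        using S \<open>admissible k (cube_pt k a)\<close> i by auto
      then show ?thesis
        using card_parity[OF Wc_pm1] True \<open>admissible k (cube_pt k a)\<close> by simp
    qed
  qed
qed

lemma tauE_Fset:
  fixes m :: "'d::finite vec"
  assumes "m \<in> idx k"
  shows "tauE Fset k m
    = (if admissible k (cube_pt k m) then 2 ^ constraints_below k / 2 ^ (CARD('d) * k) else 0)"
  using assms
proof (induction k arbitrary: m)
  case 0
  then show ?case
    using cube_disjoint_Fset_iff[of 0 m] by (simp add: admissible_def constraints_below_def)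
next
  case (Suc k)
  define a \<sigma> where "a = (\<lambda>l. m l div 2)" and "\<sigma> = (\<lambda>l. m l mod 2)"
  have a: "a \<in> idx k"
    using Suc.prems unfolding idx_def a_def by (auto intro!: less_mult_imp_div_less simp: mult.commute)
  have \<sigma>: "\<sigma> \<in> idx 1"
    by (simp add: idx_def \<sigma>_def)
  have m: "m = sub_index 1 a \<sigma>"
    by (simp add: a_def \<sigma>_def)
  have "tauE Fset (Suc k) m = (if cube (Suc k) m \<inter> Fset = {} then 0
      else tauE Fset k a / real (card {\<tau> \<in> idx 1. cube (Suc k) (sub_index 1 a \<tau>) \<inter> Fset \<noteq> {}}))"
    unfolding a_def power_one_right by (rule tauE.simps(2))
  then have step: "tauE Fset (Suc k) m = (if admissible (Suc k) (cube_pt (Suc k) m)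
      then tauE Fset k a / real (card {\<tau> \<in> idx 1. admissible (Suc k) (cube_pt (Suc k) (sub_index 1 a \<tau>))})
      else 0)"
    by (simp add: cube_disjoint_Fset_iff del: tauE.simps)
  show ?case
  proof (cases "admissible (Suc k) (cube_pt (Suc k) m)")
    case True
    have "cube_pt (Suc k) m l t = cube_pt k a l t" if "t < k" for l t
      using cube_pt_sub_index_low[OF \<sigma> that, of a l] by (simp add: m)
    then have "admissible k (cube_pt k a)"
      using True admissible_Suc admissible_cong[of k "cube_pt (Suc k) m" "cube_pt k a"] by blast
    then have "tauE Fset (Suc k) m
        = 2 ^ constraints_below k / 2 ^ (CARD('d) * k) / (2 ^ CARD('d) / (if \<exists>i. 2 * ms' i = k then 2 else 1))"
      unfolding step Suc.IH[OF a] card_admissible_children[OF a] using True by simp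
    then show ?thesis
      using True by (simp add: constraints_below_Suc power_add)
  qed (unfold step, simp)
qed

declare tauE.simps(2) [simp del]

section \<open>Fourier coefficients of tau_F\<close>

lemma tauhat_eq_sum:
  assumes "(LEAST k. r \<le> k \<and> n \<in> idx k) = r + j" "m \<in> idx r"
  shows "tauhat \<tau> n r m = (\<Sum>x\<in>idx j. Wc (r + j) n (sub_index j m x) * \<tau> (r + j) (sub_index j m x))"
  unfolding tauhat_def Let_def assms(1) subcubes_eq_image[OF assms(2)]
  by (simp add: sum.reindex[OF inj_on_subset[OF inj_sub_index subset_UNIV]])

lemma tauhat_all_eq_sum_tauhat:
  assumes "(LEAST k. 0 \<le> k \<and> n \<in> idx k) = r + j" "(LEAST k. r \<le> k \<and> n \<in> idx k) = r + j"
  shows "tauhat_all \<tau> n = (\<Sum>m\<in>idx r. tauhat \<tau> n r m)"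
proof -
  have "tauhat_all \<tau> n = (\<Sum>x\<in>idx (r + j). Wc (r + j) n x * \<tau> (r + j) x)"
    using tauhat_eq_sum[of 0 n "r + j" "\<lambda>l. 0" \<tau>] assms(1) by (simp add: tauhat_all_def idx_def)
  also have "\<dots> = (\<Sum>m\<in>idx r. \<Sum>x\<in>idx j. Wc (r + j) n (sub_index j m x) * \<tau> (r + j) (sub_index j m x))"
    by (rule sum_idx_add)
  also have "\<dots> = (\<Sum>m\<in>idx r. tauhat \<tau> n r m)"
    using tauhat_eq_sum[OF assms(2)] by simp
  finally show ?thesis .
qed

lemma Least_idx_frequency:
  assumes "p \<in> idx M" "q \<in> idx M" "r \<le> Suc (2 * M)"
  shows "(LEAST k. r \<le> k \<and> (\<lambda>l. 2 ^ (2 * M) + 2 ^ M * p l + q l) \<in> idx k) = Suc (2 * M)"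
proof (rule Least_equality)
  let ?n = "\<lambda>l. 2 ^ (2 * M) + 2 ^ M * p l + q l"
  have "?n = sub_index M (sub_index M (\<lambda>_. 1) p) q"
    by (simp add: fun_eq_iff mult_2 power_add distrib_left)
  moreover have "sub_index M (sub_index M (\<lambda>_. 1) p) q \<in> idx (1 + M + M)"
    using assms by (intro sub_index_in_idx) (simp_all add: idx_def)
  ultimately show "r \<le> Suc (2 * M) \<and> ?n \<in> idx (Suc (2 * M))"
    using assms(3) by (simp add: mult_2)
  fix k assume "r \<le> k \<and> ?n \<in> idx k"
  then have "(2::nat) ^ (2 * M) < 2 ^ k"
    unfolding idx_def by (metis (mono_tags, lifting) le_add1 le_less_trans mem_Collect_eq)
  then show "Suc (2 * M) \<le> k"
    by simp
qed

lemma Wc_frequency_factors: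
  assumes "p \<in> idx M" "q \<in> idx M" "m' \<in> idx M" "\<sigma> \<in> idx 1"
  shows "Wc (Suc (2 * M)) (\<lambda>l. 2 ^ (2 * M) + 2 ^ M * p l + q l) (sub_index (Suc M) m0 (sub_index 1 m' \<sigma>))
    = Wc M q m0 * Wc M p m' * Wc 1 (\<lambda>_. 1) \<sigma>"
proof -
  have n: "(\<lambda>l. 2 ^ (2 * M) + 2 ^ M * p l + q l) = sub_index M (sub_index M (\<lambda>_. 1) p) q"
    by (simp add: fun_eq_iff mult_2 power_add distrib_left)
  have "sub_index 1 m' \<sigma> \<in> idx (M + 1)"
    using assms(3,4) by (rule sub_index_in_idx)
  with assms(2) have "Wc (M + (M + 1)) (sub_index M (sub_index M (\<lambda>_. 1) p) q)
        (sub_index (M + 1) m0 (sub_index 1 m' \<sigma>))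
      = Wc M q m0 * Wc (M + 1) (sub_index M (\<lambda>_. 1) p) (sub_index 1 m' \<sigma>)"
    by (rule Wc_sub_index)
  also have "Wc (M + 1) (sub_index M (\<lambda>_. 1) p) (sub_index 1 m' \<sigma>) = Wc M p m' * Wc 1 (\<lambda>_. 1) \<sigma>"
    using assms(1,4) by (rule Wc_sub_index)
  finally show ?thesis
    unfolding n by (simp add: mult_2)
qed

lemma tauE_Fset_fine_subcube:
  fixes m0 :: "'d::finite vec"
  assumes m0: "m0 \<in> idx (ms' s)" and m': "m' \<in> idx (ms' s)" and \<sigma>: "\<sigma> \<in> idx 1"
  shows "tauE Fset (Suc (2 * ms' s)) (sub_index (Suc (ms' s)) m0 (sub_index 1 m' \<sigma>))
    = (if cube (ms' s) m0 \<subseteq> Ftil s \<and> Wc 1 (\<lambda>_. 1) \<sigma> = Wc (ms' s) m0 m'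
       then 2 ^ Suc s / 2 ^ (CARD('d) * Suc (2 * ms' s)) else 0)"
proof -
  let ?M = "ms' s"
  let ?y = "sub_index (Suc ?M) m0 (sub_index 1 m' \<sigma>)"
  let ?g = "cube_pt (Suc (2 * ?M)) ?y"
  have x: "sub_index 1 m' \<sigma> \<in> idx (Suc ?M)"
    using sub_index_in_idx[OF m' \<sigma>] by simp
  have "?g \<in> cube (?M + Suc ?M) ?y"
    using cube_pt_in_cube[of "?M + Suc ?M" ?y] by (simp add: mult_2)
  then have "?g \<in> cube ?M m0"
    by (rule subsetD[OF cube_sub_index_subset[OF x]])
  then have "admissible ?M ?g \<longleftrightarrow> cube ?M m0 \<subseteq> Ftil s"
    using admissible_cong[of ?M ?g "cube_pt ?M m0"] by (simp add: mem_cube_iff cube_subset_Ftil_iff)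
  moreover have "?y = sub_index 1 (sub_index ?M m0 m') \<sigma>"
    by (simp add: fun_eq_iff algebra_simps)
  then have "?g \<in> Fs (Suc s) \<longleftrightarrow> Wc 1 (\<lambda>_. 1) \<sigma> = Wc ?M m0 m'"
    using child_mem_Fs_iff[of m0 "Suc s" m' \<sigma>] m0 m' \<sigma> by simp
  moreover have "?y \<in> idx (Suc (2 * ?M))"
    using sub_index_in_idx[OF m0 x] by (simp add: mult_2)
  ultimately show ?thesis
    unfolding tauE_Fset[OF \<open>?y \<in> idx (Suc (2 * ?M))\<close>] admissible_Suc_double_ms'_iff
      constraints_below_Suc_double_ms'
    by simp
qed

lemma sum_parity_indicator:
  assumes "c \<in> {1, -1}"
  shows "(\<Sum>\<sigma>\<in>(idx 1 :: 'd::finite vec set).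
      Wc 1 (\<lambda>_. 1) \<sigma> * (if Wc 1 (\<lambda>_. 1) \<sigma> = c then 1 else 0))
    = c * 2 ^ CARD('d) / 2"
proof -
  let ?w = "Wc 1 (\<lambda>_. 1) :: 'd vec \<Rightarrow> real"
  have "(\<Sum>\<sigma>\<in>idx 1. ?w \<sigma> * (if ?w \<sigma> = c then 1 else 0))
      = c * (\<Sum>\<sigma>\<in>idx 1. if ?w \<sigma> = c then 1 else 0)"
    by (auto simp: sum_distrib_left intro: sum.cong)
  also have "\<dots> = c * real (card {\<sigma> \<in> idx 1. ?w \<sigma> = c})"
    by (simp add: sum.inter_filter[OF finite_idx, symmetric])
  finally show ?thesis
    using card_parity[OF assms, where 'd = 'd] by simp
qed

lemma two_power_scaling:
  "(2::real) ^ Suc s / 2 ^ (d * Suc (2 * M)) * 2 ^ d / 2 * 2 ^ (M * d) = 2 ^ s / 2 ^ (d * M)"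
proof -
  have "d * Suc (2 * M) = d + d * M + d * M"
    by (simp add: algebra_simps)
  then have "(2::real) ^ (d * Suc (2 * M)) = 2 ^ d * 2 ^ (d * M) * 2 ^ (d * M)"
    by (simp only: power_add)
  then show ?thesis
    by (simp add: field_simps)
qed

lemma tauhat_tauE_Fset_cube:
  fixes p q m0 :: "'d::finite vec"
  assumes p: "p \<in> idx (ms' s)" and q: "q \<in> idx (ms' s)" and m0: "m0 \<in> idx (ms' s)"
  shows "tauhat (tauE Fset) (\<lambda>l. 2 ^ (2 * ms' s) + 2 ^ ms' s * p l + q l) (ms' s) m0
    = 2 ^ s / 2 ^ (CARD('d) * ms' s) * Wc (ms' s) q m0 * (if m0 = p then 1 else 0)
      * (if cube (ms' s) m0 \<subseteq> Ftil s then 1 else 0)"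
proof -
  let ?M = "ms' s" and ?d = "CARD('d)"
  let ?n = "\<lambda>l. 2 ^ (2 * ?M) + 2 ^ ?M * p l + q l"
  let ?w = "Wc 1 (\<lambda>_. 1) :: 'd vec \<Rightarrow> real"
  define C :: real where "C = (if cube ?M m0 \<subseteq> Ftil s then 2 ^ Suc s / 2 ^ (?d * Suc (2 * ?M)) else 0)"
  define f where "f x = Wc (Suc (2 * ?M)) ?n (sub_index (Suc ?M) m0 x)
    * tauE Fset (Suc (2 * ?M)) (sub_index (Suc ?M) m0 x)" for x
  have scale: "C * 2 ^ ?d / 2 * 2 ^ (?M * ?d)
      = (if cube ?M m0 \<subseteq> Ftil s then 2 ^ s / 2 ^ (?d * ?M) else 0)"
  proof (cases "cube ?M m0 \<subseteq> Ftil s")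
    case True
    show ?thesis
      unfolding C_def if_P[OF True] two_power_scaling ..
  qed (simp add: C_def)
  have "(LEAST k. ?M \<le> k \<and> ?n \<in> idx k) = ?M + Suc ?M"
    using Least_idx_frequency[OF p q, of ?M] by simp
  then have "tauhat (tauE Fset) ?n ?M m0 = (\<Sum>x\<in>idx (Suc ?M). f x)"
    by (simp add: tauhat_eq_sum[OF _ m0] f_def mult_2)
  also have "\<dots> = (\<Sum>m'\<in>idx ?M. \<Sum>\<sigma>\<in>idx 1. f (sub_index 1 m' \<sigma>))"
    using sum_idx_add[of f ?M 1] by simp
  also have "\<dots> = (\<Sum>m'\<in>idx ?M. \<Sum>\<sigma>\<in>idx 1.
      Wc ?M q m0 * Wc ?M p m' * C * (?w \<sigma> * (if ?w \<sigma> = Wc ?M m0 m' then 1 else 0)))"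
  proof (intro sum.cong refl)
    fix m' \<sigma> :: "'d vec" assume "m' \<in> idx ?M" "\<sigma> \<in> idx 1"
    then show "f (sub_index 1 m' \<sigma>)
        = Wc ?M q m0 * Wc ?M p m' * C * (?w \<sigma> * (if ?w \<sigma> = Wc ?M m0 m' then 1 else 0))"
      unfolding f_def Wc_frequency_factors[OF p q \<open>m' \<in> idx ?M\<close> \<open>\<sigma> \<in> idx 1\<close>]
        tauE_Fset_fine_subcube[OF m0 \<open>m' \<in> idx ?M\<close> \<open>\<sigma> \<in> idx 1\<close>]
      by (simp add: C_def)
  qed
  also have "\<dots> = (\<Sum>m'\<in>idx ?M. Wc ?M q m0 * Wc ?M p m' * C * (Wc ?M m0 m' * 2 ^ ?d / 2))"
    by (simp only: sum_parity_indicator[OF Wc_pm1] flip: sum_distrib_left)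
  also have "\<dots> = Wc ?M q m0 * C * 2 ^ ?d / 2 * (\<Sum>m'\<in>idx ?M. Wc ?M p m' * Wc ?M m0 m')"
    by (simp add: sum_distrib_left algebra_simps)
  also have "\<dots> = Wc ?M q m0 * (if p = m0 then C * 2 ^ ?d / 2 * 2 ^ (?M * ?d) else 0)"
    by (simp add: sum_Wc_mult_Wc[OF p m0])
  also have "\<dots> = 2 ^ s / 2 ^ (?d * ?M) * Wc ?M q m0 * (if m0 = p then 1 else 0)
      * (if cube ?M m0 \<subseteq> Ftil s then 1 else 0)"
    unfolding scale by auto
  finally show ?thesis .
qed

lemma tauhat_all_tauE_Fset:
  fixes p q :: "'d::finite vec"
  assumes p: "p \<in> idx (ms' s)" and q: "q \<in> idx (ms' s)"
  shows "tauhat_all (tauE Fset) (\<lambda>l. 2 ^ (2 * ms' s) + 2 ^ ms' s * p l + q l)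
    = 2 ^ s / 2 ^ (CARD('d) * ms' s) * Wc (ms' s) q p * (if cube (ms' s) p \<subseteq> Ftil s then 1 else 0)"
proof -
  let ?M = "ms' s"
  let ?n = "\<lambda>l. 2 ^ (2 * ?M) + 2 ^ ?M * p l + q l"
  let ?c = "2 ^ s / 2 ^ (CARD('d) * ?M) * Wc ?M q p * (if cube ?M p \<subseteq> Ftil s then 1 else 0)"
  have "tauhat_all (tauE Fset) ?n = (\<Sum>m\<in>idx ?M. tauhat (tauE Fset) ?n ?M m)"
    using Least_idx_frequency[OF p q, of 0] Least_idx_frequency[OF p q, of ?M]
    by (intro tauhat_all_eq_sum_tauhat[where j = "Suc ?M"]) (simp_all add: mult_2)
  also have "\<dots> = (\<Sum>m\<in>idx ?M. if m = p then ?c else 0)"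
    by (rule sum.cong) (simp_all add: tauhat_tauE_Fset_cube[OF p q])
  also have "\<dots> = ?c"
    using p by (simp add: finite_idx)
  finally show ?thesis .
qed

theorem lemma2:
  fixes s :: nat and p q n :: "'d::finite \<Rightarrow> nat"
  assumes "card (UNIV :: 'd set) \<ge> 2"
    and "s \<ge> 1"
    and "p \<in> idx (ms s)" and "q \<in> idx (ms s)"
    and "n = (\<lambda>l. 2 ^ (2 * ms s) + 2 ^ ms s * p l + q l)"
  shows "(\<forall>m\<in>idx (ms s).
            tauhat (tauE (Fset :: 'd pt set)) n (ms s) m
            = 2 powi (int s - 1 - int (card (UNIV :: 'd set)) * int (ms s)) * Wc (ms s) q m
              * (if m = p then 1 else 0)
              * (if cube (ms s) m \<subseteq> (Ftil (s - 1) :: 'd pt set) then 1 else 0))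
       \<and> tauhat_all (tauE (Fset :: 'd pt set)) n
            = 2 powi (int s - 1 - int (card (UNIV :: 'd set)) * int (ms s)) * Wc (ms s) q p
              * (if cube (ms s) p \<subseteq> (Ftil (s - 1) :: 'd pt set) then 1 else 0)"
proof -
  \<comment> \<open>The argument works for every d \<ge> 1.\<close>
  obtain s0 where s: "s = Suc s0"
    using assms(2) by (cases s) auto
  have p: "p \<in> idx (ms' s0)" and q: "q \<in> idx (ms' s0)"
    using assms(3,4) by (simp_all add: s)
  have "int s - 1 - int CARD('d) * int (ms s) = int s0 - int (CARD('d) * ms' s0)"
    by (simp add: s)
  then have "2 powi (int s - 1 - int CARD('d) * int (ms s)) = (2::real) ^ s0 / 2 ^ (CARD('d) * ms' s0)"
    by (simp add: power_int_diff del: of_nat_mult)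
  then show ?thesis
    using tauhat_tauE_Fset_cube[OF p q] tauhat_all_tauE_Fset[OF p q] assms(5) by (simp add: s)
qed

end
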